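(* Let $u_0\in C(\mathbb{R})$ satisfy $u_0(x)>0$ for all $x\in\mathbb{R}$, $\liminf_{x\to-\infty}u_0(x)>0$, $u_0(x)\to0$ as $x\to+\infty$, and suppose there is a constant $\xi_0$ such that $u_0\in C^2([\xi_0,+\infty))$, $u_0'\le0$ on $[\xi_0,+\infty)$, and $u_0''(x)/u_0(x)\to0$ as $x\to+\infty$. Then: (i) $u_0'(x)/u_0(x)\to0$ as $x\to+\infty$; (ii) for every $\kappa>0$ there exists $x_\kappa$ such that $u_0(x)\ge e^{-\kappa x}$ for all $x\in[x_\kappa,+\infty)$; (iii) for any $\gamma_1>0$, $\gamma_2>0$ and $\rho_1>\rho_2>0$, if functions $y_1(t)$, $y_2(t)$ satisfy $u_0(y_1(t))=\gamma_1e^{-\rho_1t}$ and $u_0(y_2(t))=\gamma_2e^{-\rho_2t}$ for all $t>0$ large enough, then $\lim_{t\to+\infty}(y_1(t)-y_2(t))=+\infty$. *)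

theory Defs
  imports "HOL-Analysis.Analysis"
begin

end

theory Submission
  imports Defs "HOL-Real_Asymp.Real_Asymp"
begin

(* For large x we have u0'' <= e u0 <= e u0(x) on [x, x + h], as u0 is nonincreasing there, so
   Taylor's bound and u0(x + h) > 0 give u0'(x) > -(1/h + e h/2) u0(x); with h = 2/eps and
   e = eps^2/4 this is -(3/4) eps u0(x), which proves (i). By (i), ln u0 + kappa x is eventually
   nondecreasing for every kappa > 0. This gives (ii) and, for kappa = 1,
   y1 - y2 >= ln u0(y2) - ln u0(y1) = ln (gamma2/gamma1) + (rho1 - rho2) t once y1 and y2 are
   large. They are, because u0 is bounded away from 0 on every half-line (-infinity, K] while
   u0(y1 t) and u0(y2 t) tend to 0. *)

lemma nonincreasing_if_deriv_nonpos:
  fixes f f' :: "real \<Rightarrow> real"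
  assumes "\<And>t. t > a \<Longrightarrow> (f has_real_derivative f' t) (at t)"
    and "\<And>t. t > a \<Longrightarrow> f' t \<le> 0"
    and "a < x" "x \<le> y"
  shows "f y \<le> f x"
proof (rule DERIV_nonpos_imp_nonincreasing[OF \<open>x \<le> y\<close>])
  fix t assume "x \<le> t" "t \<le> y"
  with assms show "\<exists>d. (f has_real_derivative d) (at t) \<and> d \<le> 0"
    by (intro exI[of _ "f' t"]) auto
qed

lemma second_order_upper_bound:
  fixes f f' f'' :: "real \<Rightarrow> real"
  assumes "a \<le> b"
    and f': "\<And>t. a \<le> t \<Longrightarrow> t \<le> b \<Longrightarrow> (f has_real_derivative f' t) (at t)"
    and f'': "\<And>t. a \<le> t \<Longrightarrow> t \<le> b \<Longrightarrow> (f' has_real_derivative f'' t) (at t)"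
    and bound: "\<And>t. a \<le> t \<Longrightarrow> t \<le> b \<Longrightarrow> f'' t \<le> M"
  shows "f b \<le> f a + f' a * (b - a) + M * (b - a)\<^sup>2 / 2"
proof -
  have slope: "f' t \<le> f' a + M * (t - a)" if "a \<le> t" "t \<le> b" for t
  proof -
    have "f' t - M * t \<le> f' a - M * a"
    proof (rule DERIV_nonpos_imp_nonincreasing[OF \<open>a \<le> t\<close>])
      fix s assume "a \<le> s" "s \<le> t"
      with that show "\<exists>y. ((\<lambda>s. f' s - M * s) has_real_derivative y) (at s) \<and> y \<le> 0"
        by (intro exI[of _ "f'' s - M"]) (auto intro!: derivative_eq_intros f'' bound)
    qed
    then show ?thesis by (simp add: algebra_simps)
  qed
  have "f b - f' a * b - M * (b - a)\<^sup>2 / 2 \<le> f a - f' a * a - M * (a - a)\<^sup>2 / 2"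
  proof (rule DERIV_nonpos_imp_nonincreasing[OF \<open>a \<le> b\<close>])
    fix s assume "a \<le> s" "s \<le> b"
    then show "\<exists>y. ((\<lambda>s. f s - f' a * s - M * (s - a)\<^sup>2 / 2) has_real_derivative y) (at s) \<and> y \<le> 0"
      using slope[of s] by (intro exI[of _ "f' s - f' a - M * (s - a)"]) (auto intro!: derivative_eq_intros f')
  qed
  then show ?thesis by (simp add: algebra_simps)
qed

lemma eventually_log_derivative_gt:
  fixes f f' f'' :: "real \<Rightarrow> real"
  assumes pos: "\<And>x. x > a \<Longrightarrow> f x > 0"
    and f': "\<And>x. x > a \<Longrightarrow> (f has_real_derivative f' x) (at x)"
    and f'': "\<And>x. x > a \<Longrightarrow> (f' has_real_derivative f'' x) (at x)"
    and nonpos: "\<And>x. x > a \<Longrightarrow> f' x \<le> 0"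
    and ratio: "((\<lambda>x. f'' x / f x) \<longlongrightarrow> 0) at_top"
    and \<epsilon>: "\<epsilon> > 0"
  shows "\<forall>\<^sub>F x in at_top. - \<epsilon> < f' x / f x"
proof -
  define e h where "e = \<epsilon>\<^sup>2 / 4" and "h = 2 / \<epsilon>"
  have "e > 0" "h > 0" "e * h\<^sup>2 = 1" "h * \<epsilon> = 2"
    using \<epsilon> by (simp_all add: e_def h_def power2_eq_square)
  obtain S where S: "\<And>x. x \<ge> S \<Longrightarrow> f'' x / f x < e"
    using order_tendstoD(2)[OF ratio \<open>e > 0\<close>] by (auto simp: eventually_at_top_linorder)
  show ?thesis
    using eventually_ge_at_top[of "max S (a + 1)"]
  proof eventually_elim
    case (elim x)
    have "f'' t \<le> e * f x" if "x \<le> t" for t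
    proof -
      have "f'' t < e * f t" using S[of t] pos[of t] elim that by (simp add: divide_less_eq)
      also have "\<dots> \<le> e * f x"
        using nonincreasing_if_deriv_nonpos[OF f' nonpos] elim that \<open>e > 0\<close> by simp
      finally show ?thesis by simp
    qed
    then have "f (x + h) \<le> f x + f' x * h + e * f x * h\<^sup>2 / 2"
      using second_order_upper_bound[of x "x + h" f f' f'' "e * f x"] \<open>h > 0\<close> elim
      by (simp add: f' f'')
    moreover have "f (x + h) > 0" using pos \<open>h > 0\<close> elim by simp
    moreover have "e * f x * h\<^sup>2 / 2 = f x / 2"
      using \<open>e * h\<^sup>2 = 1\<close> by (metis mult.commute mult.left_commute mult_1_right)
    ultimately have "0 < 3 / 2 * f x + f' x * h" by simp
    then have "0 < (3 / 2 * f x + f' x * h) * (\<epsilon> / 2)" using \<epsilon> by simp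
    also have "\<dots> = 3 / 4 * \<epsilon> * f x + f' x * (h * \<epsilon>) / 2" by (simp add: algebra_simps)
    also have "\<dots> = 3 / 4 * \<epsilon> * f x + f' x" using \<open>h * \<epsilon> = 2\<close> by simp
    finally have "0 < 3 / 4 * \<epsilon> * f x + f' x" .
    moreover have "\<epsilon> * f x > 0" using \<epsilon> pos[of x] elim by simp
    ultimately have "- \<epsilon> * f x < f' x" by linarith
    then show ?case using pos[of x] elim by (simp add: less_divide_eq)
  qed
qed

lemma log_derivative_tendsto_zero:
  fixes f f' f'' :: "real \<Rightarrow> real"
  assumes pos: "\<And>x. x > a \<Longrightarrow> f x > 0"
    and f': "\<And>x. x > a \<Longrightarrow> (f has_real_derivative f' x) (at x)"
    and f'': "\<And>x. x > a \<Longrightarrow> (f' has_real_derivative f'' x) (at x)"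
    and nonpos: "\<And>x. x > a \<Longrightarrow> f' x \<le> 0"
    and ratio: "((\<lambda>x. f'' x / f x) \<longlongrightarrow> 0) at_top"
  shows "((\<lambda>x. f' x / f x) \<longlongrightarrow> 0) at_top"
proof (rule order_tendstoI)
  fix c :: real assume "c < 0"
  then show "\<forall>\<^sub>F x in at_top. c < f' x / f x"
    using eventually_log_derivative_gt[OF assms, where \<epsilon> = "- c"] by simp
next
  fix c :: real assume "0 < c"
  have "f' x / f x < c" if "x > a" for x
    using divide_nonpos_pos[OF nonpos pos, OF that that] \<open>0 < c\<close> by linarith
  then show "\<forall>\<^sub>F x in at_top. f' x / f x < c"
    using eventually_gt_at_top[of a] by (rule eventually_mono[rotated])
qed

lemma ln_add_linear_nondecreasing:
  fixes f f' :: "real \<Rightarrow> real"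
  assumes "a \<le> b"
    and "\<And>t. a \<le> t \<Longrightarrow> t \<le> b \<Longrightarrow> f t > 0"
    and "\<And>t. a \<le> t \<Longrightarrow> t \<le> b \<Longrightarrow> (f has_real_derivative f' t) (at t)"
    and "\<And>t. a \<le> t \<Longrightarrow> t \<le> b \<Longrightarrow> - \<kappa> \<le> f' t / f t"
  shows "ln (f a) + \<kappa> * a \<le> ln (f b) + \<kappa> * b"
proof (rule DERIV_nonneg_imp_nondecreasing[OF \<open>a \<le> b\<close>])
  fix t assume t: "a \<le> t" "t \<le> b"
  have "((\<lambda>x. ln (f x) + \<kappa> * x) has_real_derivative f' t / f t + \<kappa>) (at t)"
    using assms(2,3)[OF t] by (auto intro!: derivative_eq_intros simp: field_simps)
  moreover have "0 \<le> f' t / f t + \<kappa>" using assms(4)[OF t] by simp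
  ultimately show "\<exists>y. ((\<lambda>x. ln (f x) + \<kappa> * x) has_real_derivative y) (at t) \<and> 0 \<le> y"
    by blast
qed

lemma eventually_ln_add_linear_nondecreasing:
  fixes f f' :: "real \<Rightarrow> real"
  assumes pos: "\<And>x. x > a \<Longrightarrow> f x > 0"
    and f': "\<And>x. x > a \<Longrightarrow> (f has_real_derivative f' x) (at x)"
    and ratio: "((\<lambda>x. f' x / f x) \<longlongrightarrow> 0) at_top"
    and "\<kappa> > 0"
  obtains X where "X > a" "\<And>s t. X \<le> s \<Longrightarrow> s \<le> t \<Longrightarrow> ln (f s) + \<kappa> * s \<le> ln (f t) + \<kappa> * t"
proof -
  obtain S where S: "\<And>x. x \<ge> S \<Longrightarrow> - \<kappa> < f' x / f x"
    using order_tendstoD(1)[OF ratio, of "- \<kappa>"] \<open>\<kappa> > 0\<close> by (auto simp: eventually_at_top_linorder)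
  show ?thesis
  proof
    fix s t assume "max S (a + 1) \<le> s" "s \<le> t"
    then show "ln (f s) + \<kappa> * s \<le> ln (f t) + \<kappa> * t"
      using S by (intro ln_add_linear_nondecreasing[of s t f f']) (auto intro: pos f' less_imp_le)
  qed simp
qed

lemma eventually_exp_lower_bound:
  fixes f f' :: "real \<Rightarrow> real"
  assumes "\<And>x. x > a \<Longrightarrow> f x > 0"
    and "\<And>x. x > a \<Longrightarrow> (f has_real_derivative f' x) (at x)"
    and "((\<lambda>x. f' x / f x) \<longlongrightarrow> 0) at_top"
    and "\<kappa> > 0"
  shows "\<exists>X. \<forall>x\<ge>X. exp (- \<kappa> * x) \<le> f x"
proof -
  obtain X where X: "X > a" "\<And>s t. X \<le> s \<Longrightarrow> s \<le> t \<Longrightarrow> ln (f s) + \<kappa> / 2 * s \<le> ln (f t) + \<kappa> / 2 * t"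
    using eventually_ln_add_linear_nondecreasing[OF assms(1-3), where \<kappa> = "\<kappa> / 2"] \<open>\<kappa> > 0\<close>
    by auto
  define C where "C = ln (f X) + \<kappa> / 2 * X"
  have "exp (- \<kappa> * x) \<le> f x" if "max X (- 2 * C / \<kappa>) \<le> x" for x
  proof -
    have "- 2 * C \<le> \<kappa> * x" using that \<open>\<kappa> > 0\<close> by (simp add: field_simps)
    then have "- \<kappa> * x \<le> ln (f x)" using X(2)[of X x] that by (simp add: C_def)
    then have "exp (- \<kappa> * x) \<le> exp (ln (f x))" by simp
    then show ?thesis using assms(1)[of x] X(1) that by simp
  qed
  then show ?thesis by blast
qed

lemma Liminf_at_bot_pos_imp_bounded_below:
  fixes f :: "real \<Rightarrow> real"
  assumes cont: "continuous_on UNIV f"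
    and pos: "\<And>x. f x > 0"
    and liminf: "Liminf at_bot (\<lambda>x. ereal (f x)) > 0"
  shows "\<exists>c>0. \<forall>x\<le>K. c \<le> f x"
proof -
  obtain z where z: "0 < ereal z" "ereal z < Liminf at_bot (\<lambda>x. ereal (f x))"
    using ereal_dense2[OF liminf] by blast
  obtain M where M: "\<And>x. x \<le> M \<Longrightarrow> z < f x"
    using less_LiminfD[OF z(2)] by (auto simp: eventually_at_bot_linorder)
  have "continuous_on {M..max M K} f" "{M..max M K} \<noteq> {}"
    using continuous_on_subset[OF cont] by auto
  then obtain m where m: "\<And>x. x \<in> {M..max M K} \<Longrightarrow> f m \<le> f x"
    using continuous_attains_inf[OF compact_Icc] by blast
  have "min z (f m) \<le> f x" if "x \<le> K" for x
    using M[of x] m[of x] that by (cases "x \<le> M") auto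
  moreover have "min z (f m) > 0" using z pos by simp
  ultimately show ?thesis by blast
qed

lemma filterlim_at_top_if_values_tendsto_zero:
  fixes f :: "real \<Rightarrow> real"
  assumes bounded: "\<And>K. \<exists>c>0. \<forall>x\<le>K. c \<le> f x"
    and lim: "((\<lambda>t. f (y t)) \<longlongrightarrow> 0) F"
  shows "filterlim y at_top F"
  unfolding filterlim_at_top
proof
  fix K
  obtain c where c: "c > 0" "\<And>x. x \<le> K \<Longrightarrow> c \<le> f x" using bounded by blast
  show "\<forall>\<^sub>F t in F. K \<le> y t"
    using order_tendstoD(2)[OF lim \<open>c > 0\<close>]
    by (rule eventually_mono) (metis c(2) linorder_not_le order.strict_implies_order)
qed

lemma filterlim_diff_at_top_if_ln_ratio_at_top:
  fixes y1 y2 :: "'a \<Rightarrow> real" and f :: "real \<Rightarrow> real"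
  assumes pos: "\<And>s. X \<le> s \<Longrightarrow> f s > 0"
    and nonincr: "\<And>s t. X \<le> s \<Longrightarrow> s \<le> t \<Longrightarrow> f t \<le> f s"
    and ln_mono: "\<And>s t. X \<le> s \<Longrightarrow> s \<le> t \<Longrightarrow> ln (f s) + s \<le> ln (f t) + t"
    and y1: "filterlim y1 at_top F" and y2: "filterlim y2 at_top F"
    and ratio: "filterlim (\<lambda>x. ln (f (y2 x)) - ln (f (y1 x))) at_top F"
  shows "filterlim (\<lambda>x. y1 x - y2 x) at_top F"
proof (rule filterlim_at_top_mono[OF ratio])
  show "\<forall>\<^sub>F x in F. ln (f (y2 x)) - ln (f (y1 x)) \<le> y1 x - y2 x"
    using filterlim_at_top_dense[THEN iffD1, OF ratio, rule_format, of 0]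
      filterlim_at_top[THEN iffD1, OF y1, rule_format, of X]
      filterlim_at_top[THEN iffD1, OF y2, rule_format, of X]
  proof eventually_elim
    case (elim x)
    have "y2 x \<le> y1 x"
    proof (rule ccontr)
      assume "\<not> y2 x \<le> y1 x"
      then have "f (y2 x) \<le> f (y1 x)" using nonincr elim by simp
      then show False using elim pos by simp
    qed
    then show ?case using ln_mono[of "y2 x" "y1 x"] elim by simp
  qed
qed

lemma exp_level_curves_diverge:
  fixes f y1 y2 :: "real \<Rightarrow> real"
  assumes cont: "continuous_on UNIV f"
    and pos: "\<And>x. f x > 0"
    and liminf: "Liminf at_bot (\<lambda>x. ereal (f x)) > 0"
    and nonincr: "\<And>s t. X \<le> s \<Longrightarrow> s \<le> t \<Longrightarrow> f t \<le> f s"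
    and ln_mono: "\<And>s t. X \<le> s \<Longrightarrow> s \<le> t \<Longrightarrow> ln (f s) + s \<le> ln (f t) + t"
    and \<gamma>: "\<gamma>1 > 0" "\<gamma>2 > 0" and \<rho>: "\<rho>2 > 0" "\<rho>1 > \<rho>2"
    and ev: "\<forall>\<^sub>F t in at_top. f (y1 t) = \<gamma>1 * exp (- \<rho>1 * t) \<and> f (y2 t) = \<gamma>2 * exp (- \<rho>2 * t)"
  shows "filterlim (\<lambda>t. y1 t - y2 t) at_top at_top"
proof -
  have diverges: "filterlim y at_top at_top"
    if "\<rho> > 0" and ev: "\<forall>\<^sub>F t in at_top. f (y t) = \<gamma> * exp (- \<rho> * t)" for y \<gamma> \<rho>
  proof (rule filterlim_at_top_if_values_tendsto_zero)
    show "\<exists>c>0. \<forall>x\<le>K. c \<le> f x" for K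
      by (rule Liminf_at_bot_pos_imp_bounded_below[OF cont pos liminf])
    have "((\<lambda>t. \<gamma> * exp (- \<rho> * t)) \<longlongrightarrow> 0) at_top" using \<open>\<rho> > 0\<close> by real_asymp
    then show "((\<lambda>t. f (y t)) \<longlongrightarrow> 0) at_top" using tendsto_cong[OF ev] by simp
  qed
  have "\<forall>\<^sub>F t in at_top. ln (f (y2 t)) - ln (f (y1 t)) = ln \<gamma>2 - ln \<gamma>1 + (\<rho>1 - \<rho>2) * t"
    using ev by (rule eventually_mono) (use \<gamma> in \<open>simp add: ln_mult left_diff_distrib\<close>)
  moreover have "filterlim (\<lambda>t. ln \<gamma>2 - ln \<gamma>1 + (\<rho>1 - \<rho>2) * t) at_top at_top"
    using \<open>\<rho>1 > \<rho>2\<close> by real_asymp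
  ultimately have ratio: "filterlim (\<lambda>t. ln (f (y2 t)) - ln (f (y1 t))) at_top at_top"
    by (rule filterlim_cong[OF refl refl, THEN iffD2])
  have y1: "filterlim y1 at_top at_top"
    using ev by (intro diverges[of \<rho>1 _ \<gamma>1]) (use \<rho> in \<open>auto elim: eventually_mono\<close>)
  have y2: "filterlim y2 at_top at_top"
    using ev by (intro diverges[of \<rho>2 _ \<gamma>2]) (use \<rho> in \<open>auto elim: eventually_mono\<close>)
  show ?thesis
    by (rule filterlim_diff_at_top_if_ln_ratio_at_top[OF _ nonincr ln_mono y1 y2 ratio]) (rule pos)
qed

theorem lemma2p3:
  fixes u0 u1 u2 :: "real \<Rightarrow> real" and \<xi>0 :: real
  assumes cont: "continuous_on UNIV u0"
    and pos: "\<forall>x. u0 x > 0"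
    and liminf: "Liminf at_bot (\<lambda>x. ereal (u0 x)) > 0"
    and lim0: "(u0 \<longlongrightarrow> 0) at_top"
    and d1: "\<forall>x\<ge>\<xi>0. (u0 has_real_derivative u1 x) (at x within {\<xi>0..})"
    and d2: "\<forall>x\<ge>\<xi>0. (u1 has_real_derivative u2 x) (at x within {\<xi>0..})"
    and c2: "continuous_on {\<xi>0..} u2"
    and mono: "\<forall>x\<ge>\<xi>0. u1 x \<le> 0"
    and ratio2: "((\<lambda>x. u2 x / u0 x) \<longlongrightarrow> 0) at_top"
  shows "((\<lambda>x. u1 x / u0 x) \<longlongrightarrow> 0) at_top
    \<and> (\<forall>\<kappa>>0. \<exists>x\<kappa>. \<forall>x\<ge>x\<kappa>. u0 x \<ge> exp (- \<kappa> * x))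
    \<and> (\<forall>\<gamma>1 \<gamma>2 \<rho>1 \<rho>2 (y1::real \<Rightarrow> real) (y2::real \<Rightarrow> real).
          \<gamma>1 > 0 \<longrightarrow> \<gamma>2 > 0 \<longrightarrow> \<rho>2 > 0 \<longrightarrow> \<rho>1 > \<rho>2 \<longrightarrow>
          (\<forall>\<^sub>F t in at_top. u0 (y1 t) = \<gamma>1 * exp (- \<rho>1 * t)
                              \<and> u0 (y2 t) = \<gamma>2 * exp (- \<rho>2 * t)) \<longrightarrow>
          filterlim (\<lambda>t. y1 t - y2 t) at_top at_top)"
proof -
  have pos_right: "u0 x > 0" and u1_nonpos: "u1 x \<le> 0" if "x > \<xi>0" for x
    using pos mono that by simp_all
  have deriv_u0: "(u0 has_real_derivative u1 x) (at x)"
    and deriv_u1: "(u1 has_real_derivative u2 x) (at x)"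
    if "x > \<xi>0" for x
    using d1[rule_format, of x] d2[rule_format, of x] that at_within_interior[of x "{\<xi>0..}"]
    by simp_all
  have part1: "((\<lambda>x. u1 x / u0 x) \<longlongrightarrow> 0) at_top"
    using log_derivative_tendsto_zero[OF pos_right deriv_u0 deriv_u1 u1_nonpos ratio2] .
  have part2: "\<forall>\<kappa>>0. \<exists>x\<kappa>. \<forall>x\<ge>x\<kappa>. u0 x \<ge> exp (- \<kappa> * x)"
    using eventually_exp_lower_bound[OF pos_right deriv_u0 part1] by blast
  obtain X where X: "X > \<xi>0" "\<And>s t. X \<le> s \<Longrightarrow> s \<le> t \<Longrightarrow> ln (u0 s) + 1 * s \<le> ln (u0 t) + 1 * t"
    using eventually_ln_add_linear_nondecreasing[OF pos_right deriv_u0 part1 zero_less_one] by blast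
  have nonincr: "u0 t \<le> u0 s" if "X \<le> s" "s \<le> t" for s t
    using X(1) that by (intro nonincreasing_if_deriv_nonpos[OF deriv_u0 u1_nonpos]) auto
  have part3: "filterlim (\<lambda>t. y1 t - y2 t) at_top at_top"
    if "\<gamma>1 > 0" "\<gamma>2 > 0" "\<rho>2 > 0" "\<rho>1 > \<rho>2"
      and "\<forall>\<^sub>F t in at_top. u0 (y1 t) = \<gamma>1 * exp (- \<rho>1 * t) \<and> u0 (y2 t) = \<gamma>2 * exp (- \<rho>2 * t)"
    for \<gamma>1 \<gamma>2 \<rho>1 \<rho>2 and y1 y2 :: "real \<Rightarrow> real"
    by (rule exp_level_curves_diverge[OF cont _ liminf nonincr _ that]) (use pos X(2) in simp_all)
  show ?thesis
    using part1 part2 part3 by blast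
qed

end
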